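(* Let $n$ and $k$ be positive integers, and let $\mathcal{Q}$ be a Boolean lattice of dimension $n+k$ whose elements are colored blue or red. Then $\mathcal{Q}$ contains an all-red copy of $Q_n$ or an all-blue chain of length $k+1$ (i.e. on $k+1$ elements).
   Context: The Boolean lattice of dimension $N$ is the poset of all subsets of an $N$-element set ordered by inclusion; $Q_n$ denotes the Boolean lattice of dimension $n$. A copy of $Q_n$ in $\mathcal{Q}$ is an induced subposet of $\mathcal{Q}$ isomorphic to $Q_n$. *)

theory Defs
  imports Main
begin

text \<open>The Boolean lattice of dimension n is modelled as Pow {..<n} ordered by inclusion.
  A copy of Q_n inside the Boolean lattice Pow X is a family S of subsets of X such that
  (S, subset) is isomorphic as a poset to (Pow {..<n}, subset), i.e. the image of an
  order embedding of Pow {..<n} (order embeddings are automatically injective).\<close>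

definition is_copy_of_Q :: "nat \<Rightarrow> 'a set \<Rightarrow> 'a set set \<Rightarrow> bool" where
  "is_copy_of_Q n X S \<longleftrightarrow> S \<subseteq> Pow X \<and>
     (\<exists>f :: nat set \<Rightarrow> 'a set. f ` Pow {..<n} = S \<and>
        (\<forall>A \<in> Pow {..<n}. \<forall>B \<in> Pow {..<n}. A \<subseteq> B \<longleftrightarrow> f A \<subseteq> f B))"

definition is_chain_in :: "nat \<Rightarrow> 'a set \<Rightarrow> 'a set set \<Rightarrow> bool" where
  "is_chain_in m X S \<longleftrightarrow> S \<subseteq> Pow X \<and> finite S \<and> card S = m \<and>
     (\<forall>A \<in> S. \<forall>B \<in> S. A \<subseteq> B \<or> B \<subseteq> A)"

end

theory Submission
  imports Defs
begin

text \<open>Let the blue height of A be the size of a largest all-blue chain of subsets of A. It is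
  monotone in A, grows strictly at every blue set, and is at most k when there is no blue chain
  on k + 1 elements. Split the ground set into Y with n elements and z_0, ..., z_{k-1}. For
  B \<subseteq> Y let l(B) be the least i such that B \<union> {z_j | j < i} has blue height at most i;
  then l (red_level) is monotone, and by minimality of l(B) the set B \<union> {z_j | j < l(B)} is red.
  The map B \<mapsto> B \<union> {z_j | j < l(B)} is therefore an order embedding of Pow Y onto an
  all-red family.\<close>

definition blue_chains :: "('a set \<Rightarrow> bool) \<Rightarrow> 'a set \<Rightarrow> 'a set set set" where
  "blue_chains red A = {C. C \<subseteq> Pow A \<and> chain\<^sub>\<subseteq> C \<and> (\<forall>P\<in>C. \<not> red P)}"

definition blue_height :: "('a set \<Rightarrow> bool) \<Rightarrow> 'a set \<Rightarrow> nat" where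
  "blue_height red A = Max (card ` blue_chains red A)"

lemma finite_blue_chains: "finite A \<Longrightarrow> finite (blue_chains red A)"
  unfolding blue_chains_def by (rule finite_subset[of _ "Pow (Pow A)"]) auto

lemma finite_blue_chain: "finite A \<Longrightarrow> C \<in> blue_chains red A \<Longrightarrow> finite C"
  unfolding blue_chains_def by (auto intro: finite_subset[of _ "Pow A"])

lemma empty_in_blue_chains: "{} \<in> blue_chains red A"
  by (simp add: blue_chains_def chain_subset_def)

lemma blue_chains_mono: "A \<subseteq> B \<Longrightarrow> blue_chains red A \<subseteq> blue_chains red B"
  unfolding blue_chains_def by auto

lemma blue_chains_downward_closed:
  assumes "C \<in> blue_chains red A" "T \<subseteq> C"
  shows "T \<in> blue_chains red A"
proof -
  have "chain\<^sub>\<subseteq> C" using assms(1) unfolding blue_chains_def by simp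
  then have "chain\<^sub>\<subseteq> T" using assms(2) unfolding chain_subset_def by blast
  with assms show ?thesis unfolding blue_chains_def by auto
qed

lemma card_le_blue_height:
  "finite A \<Longrightarrow> C \<in> blue_chains red A \<Longrightarrow> card C \<le> blue_height red A"
  unfolding blue_height_def by (simp add: finite_blue_chains)

lemma blue_height_attained:
  assumes "finite A"
  obtains C where "C \<in> blue_chains red A" "card C = blue_height red A"
proof -
  have "blue_height red A \<in> card ` blue_chains red A"
    unfolding blue_height_def using assms empty_in_blue_chains
    by (intro Max_in finite_imageI finite_blue_chains) auto
  then show ?thesis using that by (metis imageE)
qed

lemma blue_height_mono:
  assumes "A \<subseteq> B" "finite B"
  shows "blue_height red A \<le> blue_height red B"
proof -
  obtain C where "C \<in> blue_chains red A" "card C = blue_height red A"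
    using blue_height_attained assms finite_subset by metis
  then show ?thesis
    using blue_chains_mono[OF assms(1)] card_le_blue_height[OF assms(2)] by (metis subsetD)
qed

lemma blue_height_strict_mono:
  assumes "A \<subset> B" "finite B" "\<not> red B"
  shows "blue_height red A < blue_height red B"
proof -
  have "finite A" using assms finite_subset by blast
  then obtain C where C: "C \<in> blue_chains red A" "card C = blue_height red A"
    by (rule blue_height_attained)
  have "B \<notin> C" using C(1) assms(1) by (auto simp: blue_chains_def)
  moreover have "insert B C \<in> blue_chains red B"
    using C(1) assms by (auto simp: blue_chains_def chain_subset_def)
  ultimately show ?thesis
    using card_le_blue_height[OF assms(2)] finite_blue_chain[OF \<open>finite A\<close> C(1)] C(2)
    by fastforce
qed

lemma blue_height_pos:
  assumes "finite B" "\<not> red B"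
  shows "0 < blue_height red B"
proof -
  have "{B} \<in> blue_chains red B" using assms by (auto simp: blue_chains_def chain_subset_def)
  from card_le_blue_height[OF assms(1) this] show ?thesis by simp
qed

lemma blue_height_le_if_no_blue_chain:
  assumes "finite X" "A \<subseteq> X"
    and no_chain: "\<not> (\<exists>C. is_chain_in (k + 1) X C \<and> (\<forall>P\<in>C. \<not> red P))"
  shows "blue_height red A \<le> k"
proof (rule ccontr)
  assume "\<not> blue_height red A \<le> k"
  have "finite A" using assms(1,2) by (rule finite_subset[rotated])
  then obtain C where C: "C \<in> blue_chains red A" "card C = blue_height red A"
    by (rule blue_height_attained)
  with \<open>\<not> blue_height red A \<le> k\<close> have "k + 1 \<le> card C" by simp
  then obtain T where T: "T \<subseteq> C" "card T = k + 1" "finite T"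
    by (rule obtain_subset_with_card_n)
  have "T \<in> blue_chains red X"
    using blue_chains_downward_closed[OF C(1) T(1)] blue_chains_mono[OF assms(2)] by blast
  then have "is_chain_in (k + 1) X T \<and> (\<forall>P\<in>T. \<not> red P)"
    using T(2,3) by (simp add: is_chain_in_def blue_chains_def chain_subset_def)
  with no_chain show False by blast
qed

definition red_level :: "('a set \<Rightarrow> bool) \<Rightarrow> (nat \<Rightarrow> 'a) \<Rightarrow> 'a set \<Rightarrow> nat" where
  "red_level red z B = (LEAST i. blue_height red (B \<union> z ` {..<i}) \<le> i)"

lemma red_level_le:
  "blue_height red (B \<union> z ` {..<k}) \<le> k \<Longrightarrow> red_level red z B \<le> k"
  unfolding red_level_def by (rule Least_le)

lemma blue_height_at_red_level:
  "blue_height red (B \<union> z ` {..<k}) \<le> k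
    \<Longrightarrow> blue_height red (B \<union> z ` {..<red_level red z B}) \<le> red_level red z B"
  unfolding red_level_def by (rule LeastI)

lemma red_level_mono:
  assumes "A \<subseteq> B" "finite B" "blue_height red (B \<union> z ` {..<k}) \<le> k"
  shows "red_level red z A \<le> red_level red z B"
proof -
  let ?l = "red_level red z B"
  have "blue_height red (A \<union> z ` {..<?l}) \<le> blue_height red (B \<union> z ` {..<?l})"
    using assms by (intro blue_height_mono) auto
  also have "\<dots> \<le> ?l" using blue_height_at_red_level[OF assms(3)] .
  finally show ?thesis unfolding red_level_def[of red z A] by (rule Least_le)
qed

lemma red_at_red_level:
  assumes "finite B" "inj_on z {..<k}" "B \<inter> z ` {..<k} = {}"
    and bound: "blue_height red (B \<union> z ` {..<k}) \<le> k"
  shows "red (B \<union> z ` {..<red_level red z B})"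
proof (rule ccontr)
  let ?l = "red_level red z B"
  assume blue: "\<not> red (B \<union> z ` {..<?l})"
  have at_l: "blue_height red (B \<union> z ` {..<?l}) \<le> ?l"
    using blue_height_at_red_level[OF bound] .
  show False
  proof (cases ?l)
    case 0
    have "finite (B \<union> z ` {..<?l})" using assms(1) by simp
    from blue_height_pos[where red = red, OF this blue] at_l 0 show False by simp
  next
    case (Suc j)
    have below: "\<not> blue_height red (B \<union> z ` {..<j}) \<le> j"
      using Suc unfolding red_level_def by (metis lessI not_less_Least)
    have "j < k" using Suc red_level_le[OF bound] by simp
    then have "z j \<notin> B \<union> z ` {..<j}"
      using assms(3) inj_on_image_mem_iff[OF assms(2), of j "{..<j}"] by auto
    then have "B \<union> z ` {..<j} \<subset> B \<union> z ` {..<?l}"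
      using Suc lessThan_Suc by auto
    from blue_height_strict_mono[where red = red, OF this _ blue] below at_l Suc assms(1)
    show False by simp
  qed
qed

lemma red_copy_of_Q:
  assumes "finite X" "bij_betw e {..<n} Y" "inj_on z {..<k}"
    and "Y \<inter> z ` {..<k} = {}" "Y \<union> z ` {..<k} \<subseteq> X"
    and bound: "\<And>B. B \<subseteq> Y \<Longrightarrow> blue_height red (B \<union> z ` {..<k}) \<le> k"
  shows "\<exists>S. is_copy_of_Q n X S \<and> (\<forall>A\<in>S. red A)"
proof -
  define f where "f S = e ` S \<union> z ` {..<red_level red z (e ` S)}" for S
  have finite_Y: "finite Y" using assms(5) by (intro rev_finite_subset[OF assms(1)]) auto
  have eS: "e ` S \<subseteq> Y" if "S \<subseteq> {..<n}" for S
    using assms(2) that by (auto simp: bij_betw_def)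
  have finite_eS: "finite (e ` S)" if "S \<subseteq> {..<n}" for S
    using finite_Y eS[OF that] by (rule rev_finite_subset)
  have level_le: "red_level red z (e ` S) \<le> k" if "S \<subseteq> {..<n}" for S
    by (rule red_level_le[OF bound[OF eS[OF that]]])
  have f_Y: "f S \<inter> Y = e ` S" if "S \<subseteq> {..<n}" for S
  proof -
    have "z ` {..<red_level red z (e ` S)} \<inter> Y = {}"
      using level_le[OF that] assms(4) by auto
    then show ?thesis using eS[OF that] unfolding f_def by auto
  qed
  have embedding: "A \<subseteq> B \<longleftrightarrow> f A \<subseteq> f B" if "A \<subseteq> {..<n}" "B \<subseteq> {..<n}" for A B
  proof
    assume "f A \<subseteq> f B"
    then have "f A \<inter> Y \<subseteq> f B \<inter> Y" by blast
    then have "e ` A \<subseteq> e ` B" by (simp only: f_Y that)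
    then show "A \<subseteq> B"
      using inj_on_image_mem_iff[OF bij_betw_imp_inj_on[OF assms(2)]] that by blast
  next
    assume "A \<subseteq> B"
    then have "red_level red z (e ` A) \<le> red_level red z (e ` B)"
      using finite_eS[OF that(2)] bound[OF eS[OF that(2)]] by (intro red_level_mono) auto
    with \<open>A \<subseteq> B\<close> show "f A \<subseteq> f B" unfolding f_def by auto
  qed
  have f_X: "f S \<subseteq> X" if "S \<subseteq> {..<n}" for S
    using eS[OF that] level_le[OF that] assms(5) unfolding f_def by auto
  have f_red: "red (f S)" if "S \<subseteq> {..<n}" for S
  proof -
    have "e ` S \<inter> z ` {..<k} = {}" using eS[OF that] assms(4) by auto
    from red_at_red_level[OF finite_eS[OF that] assms(3) this bound[OF eS[OF that]]]
    show ?thesis unfolding f_def .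
  qed
  have "is_copy_of_Q n X (f ` Pow {..<n})"
    unfolding is_copy_of_Q_def
  proof (intro conjI exI[of _ f])
    show "f ` Pow {..<n} \<subseteq> Pow X" using f_X by auto
  qed (use embedding in auto)
  moreover have "\<forall>A \<in> f ` Pow {..<n}. red A" using f_red by auto
  ultimately show ?thesis by blast
qed

theorem corollary9:
  fixes n k :: nat and X :: "'a set" and red :: "'a set \<Rightarrow> bool"
  assumes "n > 0" and "k > 0" and "finite X" and "card X = n + k"
  shows "(\<exists>S. is_copy_of_Q n X S \<and> (\<forall>A \<in> S. red A))
       \<or> (\<exists>C. is_chain_in (k + 1) X C \<and> (\<forall>A \<in> C. \<not> red A))"
proof (rule disjCI)
  assume no_chain: "\<not> (\<exists>C. is_chain_in (k + 1) X C \<and> (\<forall>A \<in> C. \<not> red A))"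
  obtain Y where Y: "Y \<subseteq> X" "card Y = n"
    using assms(4) by (metis le_add1 obtain_subset_with_card_n)
  have "finite Y" using Y(1) assms(3) by (rule rev_finite_subset[rotated])
  then have "card (X - Y) = k" using Y assms(4) by (simp add: card_Diff_subset)
  obtain e where e: "bij_betw e {..<n} Y"
    using ex_bij_betw_nat_finite[OF \<open>finite Y\<close>] Y(2) by (auto simp: atLeast0LessThan)
  obtain z where z: "bij_betw z {..<k} (X - Y)"
    using ex_bij_betw_nat_finite[of "X - Y"] assms(3) \<open>card (X - Y) = k\<close>
    by (auto simp: atLeast0LessThan)
  show "\<exists>S. is_copy_of_Q n X S \<and> (\<forall>A \<in> S. red A)"
  proof (rule red_copy_of_Q[OF assms(3) e])
    show "inj_on z {..<k}" "Y \<inter> z ` {..<k} = {}" "Y \<union> z ` {..<k} \<subseteq> X"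
      using z Y(1) by (auto simp: bij_betw_def)
    show "blue_height red (B \<union> z ` {..<k}) \<le> k" if "B \<subseteq> Y" for B
      using blue_height_le_if_no_blue_chain[OF assms(3) _ no_chain] that Y(1) z
      by (auto simp: bij_betw_def)
  qed
qed

end
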